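(* Let $n\ge2$, $1\le p<\infty$, and $h(x)=\mathrm{TV}_p(x)=\big(\sum_{i=2}^n|x_i-x_{i-1}|^p\big)^{1/p}$ on $\mathbb{R}^n$. Let $x_k\in\mathbb{R}^n$, $g\in\mathbb{R}^n$, $\nu_k>0$ and $\psi(s;x_k)=h(x_k+s)$. The problem $$\min_{s\in\mathbb{R}^n}\ g^Ts+\tfrac12\nu_k^{-1}\|s\|^2+\psi(s;x_k)$$ has a unique solution $s_{k,\mathrm{cp}}$, and $$\|s_{k,\mathrm{cp}}\|\le\begin{cases}\nu_k\Big(\|g\|+2\sin\big(\tfrac{\pi(n-1)}{2n}\big)\,n^{1/p-1/2}\Big)&\text{if }1\le p<2,\\ \nu_k\Big(\|g\|+2\sin\big(\tfrac{\pi(n-1)}{2n}\big)\Big)&\text{if }p\ge2.\end{cases}$$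
   Context: $\|\cdot\|$ is the Euclidean norm. *)

theory Defs
  imports "HOL-Analysis.Analysis"
begin

text \<open>Vectors of R^n are represented as functions nat => real with coordinates
  x 0, ..., x (n-1) (0-based) and all other coordinates equal to 0.\<close>

definition vecs :: "nat \<Rightarrow> (nat \<Rightarrow> real) set" where
  "vecs n = {x. \<forall>i\<ge>n. x i = 0}"

definition enorm :: "nat \<Rightarrow> (nat \<Rightarrow> real) \<Rightarrow> real" where
  "enorm n x = sqrt (\<Sum>i<n. (x i)\<^sup>2)"

definition dotp :: "nat \<Rightarrow> (nat \<Rightarrow> real) \<Rightarrow> (nat \<Rightarrow> real) \<Rightarrow> real" where
  "dotp n x y = (\<Sum>i<n. x i * y i)"

definition TVp :: "nat \<Rightarrow> real \<Rightarrow> (nat \<Rightarrow> real) \<Rightarrow> real" where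
  "TVp n p x = (\<Sum>i\<in>{1..<n}. \<bar>x i - x (i - 1)\<bar> powr p) powr (1 / p)"

definition cp_obj :: "nat \<Rightarrow> real \<Rightarrow> (nat \<Rightarrow> real) \<Rightarrow> (nat \<Rightarrow> real) \<Rightarrow> real
    \<Rightarrow> (nat \<Rightarrow> real) \<Rightarrow> real" where
  "cp_obj n p xk g \<nu> s = dotp n g s + (1/2) * inverse \<nu> * (enorm n s)\<^sup>2
      + TVp n p (\<lambda>i. xk i + s i)"

end

theory Submission
  imports Defs
begin

text \<open>The objective is a linear term plus the strongly convex term |s|^2/(2 nu) plus a convex,
  continuous, nonnegative psi, so it is coercive and strictly convex and has exactly one minimiser.
  If moreover psi(u + v) \<le> psi(u) + L |v|, comparing the minimiser s with (1 - tau) s and letting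
  tau tend to 0 gives |s|^2 / nu \<le> (|g| + L) |s|.
  For psi(s) = TV_p(x_k + s) one can take L = c_p |D|, where D is the difference operator
  R^n \<rightarrow> R^(n-1) and c_p compares the p-norm with the 2-norm on R^(n-1) (c_p = 1 for p \<ge> 2, and
  c_p = n^(1/p - 1/2) for p < 2 by Jensen). The bound |D| \<le> 2 cos (pi/(2n)) is certified by the
  positive weights sin ((2k+1) pi/(2n)), which satisfy the three-term recurrence of the path
  Laplacian.\<close>

lemma convex_on_powr_nonneg:
  assumes "p \<ge> 1"
  shows "convex_on {0..} (\<lambda>x::real. x powr p)"
proof (rule convex_onI)
  have scaled: "(u * z) powr p \<le> u * z powr p" if "0 \<le> u" "u \<le> 1" "0 \<le> z" for u z :: real
  proof -
    have "u powr p \<le> u powr 1"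
      using that assms by (intro powr_mono') auto
    then show ?thesis
      using that by (simp add: powr_mult mult_right_mono)
  qed
  fix t x y :: real
  assume t: "0 < t" "t < 1" and xy: "x \<in> {0..}" "y \<in> {0..}"
  show "((1 - t) *\<^sub>R x + t *\<^sub>R y) powr p \<le> (1 - t) * x powr p + t * y powr p"
  proof (cases "x = 0 \<or> y = 0")
    case True
    then show ?thesis
      using t xy scaled[of t y] scaled[of "1 - t" x] by auto
  next
    case False
    then show ?thesis
      using convex_onD[OF powr_convex[OF assms], of t x y] t xy by simp
  qed
qed auto

lemma powr_sum_triangle_ineq:
  fixes a b :: "'i \<Rightarrow> real"
  assumes I: "finite I" and p: "p \<ge> 1"
    and a: "\<And>i. i \<in> I \<Longrightarrow> a i \<ge> 0" and b: "\<And>i. i \<in> I \<Longrightarrow> b i \<ge> 0"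
  shows "(\<Sum>i\<in>I. (a i + b i) powr p) powr (1/p)
     \<le> (\<Sum>i\<in>I. a i powr p) powr (1/p) + (\<Sum>i\<in>I. b i powr p) powr (1/p)"
proof -
  define A where "A = (\<Sum>i\<in>I. a i powr p) powr (1/p)"
  define B where "B = (\<Sum>i\<in>I. b i powr p) powr (1/p)"
  have A_powr: "A powr p = (\<Sum>i\<in>I. a i powr p)" and B_powr: "B powr p = (\<Sum>i\<in>I. b i powr p)"
    unfolding A_def B_def using p by (simp_all add: powr_powr sum_nonneg)
  have vanish: "\<forall>i\<in>I. c i = 0" if "(\<Sum>i\<in>I. c i powr p) powr (1/p) = 0" for c :: "'i \<Rightarrow> real"
    using that I by (simp add: sum_nonneg_eq_0_iff)
  consider "A = 0" | "B = 0" | "A > 0" "B > 0"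
    unfolding A_def B_def by fastforce
  then show ?thesis
  proof cases
    case 1
    then show ?thesis using vanish[of a] unfolding A_def B_def by simp
  next
    case 2
    then show ?thesis using vanish[of b] unfolding A_def B_def by simp
  next
    case 3
    have normalized: "(\<Sum>i\<in>I. (c i / C) powr p) = 1"
      if "C > 0" "C powr p = (\<Sum>i\<in>I. c i powr p)" "\<And>i. i \<in> I \<Longrightarrow> c i \<ge> 0" for c C
    proof -
      have "(\<Sum>i\<in>I. (c i / C) powr p) = (\<Sum>i\<in>I. c i powr p) / C powr p"
        using that(1,3) by (simp add: powr_divide sum_divide_distrib)
      then show ?thesis
        using that(1) by (simp flip: that(2))
    qed
    have pointwise: "((a i + b i) / (A + B)) powr p
        \<le> A / (A + B) * (a i / A) powr p + B / (A + B) * (b i / B) powr p" if i: "i \<in> I" for i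
    proof -
      have weight: "1 - B / (A + B) = A / (A + B)"
        using 3 by (simp add: field_simps)
      have "(1 - B / (A + B)) *\<^sub>R (a i / A) + (B / (A + B)) *\<^sub>R (b i / B) = (a i + b i) / (A + B)"
        using 3 unfolding weight by (simp add: add_divide_distrib)
      with weight show ?thesis
        using convex_onD[OF convex_on_powr_nonneg[OF p], of "B / (A + B)" "a i / A" "b i / B"]
          3 a[OF i] b[OF i] by simp
    qed
    have "(\<Sum>i\<in>I. (a i + b i) powr p) / (A + B) powr p = (\<Sum>i\<in>I. ((a i + b i) / (A + B)) powr p)"
      using 3 a b by (simp add: powr_divide sum_divide_distrib)
    also have "\<dots> \<le> A / (A + B) * (\<Sum>i\<in>I. (a i / A) powr p) + B / (A + B) * (\<Sum>i\<in>I. (b i / B) powr p)"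
      using sum_mono[OF pointwise] by (simp add: sum.distrib sum_distrib_left)
    also have "\<dots> = 1"
      using 3 normalized[OF _ A_powr a] normalized[OF _ B_powr b] by (simp flip: add_divide_distrib)
    finally have "(\<Sum>i\<in>I. (a i + b i) powr p) \<le> (A + B) powr p"
      using 3 by simp
    then have "(\<Sum>i\<in>I. (a i + b i) powr p) powr (1/p) \<le> ((A + B) powr p) powr (1/p)"
      using p a b by (intro powr_mono2) (auto intro: sum_nonneg)
    then show ?thesis
      using 3 p by (simp add: powr_powr A_def B_def)
  qed
qed

lemma powr_sum_root_le_L2_set:
  fixes y :: "'i \<Rightarrow> real"
  assumes I: "finite I" and p: "p \<ge> 2" and y: "\<And>i. i \<in> I \<Longrightarrow> y i \<ge> 0"
  shows "(\<Sum>i\<in>I. y i powr p) powr (1/p) \<le> L2_set y I"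
proof (cases "L2_set y I = 0")
  case True
  then show ?thesis
    using I p by (simp add: L2_set_eq_0_iff)
next
  case False
  define r where "r = L2_set y I"
  have r: "r > 0"
    using False unfolding r_def by (simp add: order_less_le)
  have below_square: "(y i / r) powr p \<le> (y i / r)\<^sup>2" if i: "i \<in> I" for i
  proof -
    have "y i / r \<le> 1"
      using member_le_L2_set[OF I i, of y] r unfolding r_def by simp
    then have "(y i / r) powr p \<le> (y i / r) powr 2"
      using p y[OF i] r by (intro powr_mono') auto
    then show ?thesis
      using y[OF i] r by simp
  qed
  have "(\<Sum>i\<in>I. y i powr p) = r powr p * (\<Sum>i\<in>I. (y i / r) powr p)"
    using r y by (simp add: powr_divide sum_distrib_left)
  also have "\<dots> \<le> r powr p * (\<Sum>i\<in>I. (y i / r)\<^sup>2)"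
    by (intro mult_left_mono sum_mono below_square) auto
  also have "(\<Sum>i\<in>I. (y i / r)\<^sup>2) = 1"
    using r unfolding r_def L2_set_def
    by (simp add: power_divide sum_nonneg flip: sum_divide_distrib)
  finally have "(\<Sum>i\<in>I. y i powr p) powr (1/p) \<le> (r powr p) powr (1/p)"
    using p y by (intro powr_mono2) (auto intro: sum_nonneg)
  then show ?thesis
    using r p by (simp add: powr_powr r_def)
qed

lemma powr_sum_root_le_card_powr_L2_set:
  fixes y :: "'i \<Rightarrow> real"
  assumes I: "finite I" "I \<noteq> {}" and p: "1 \<le> p" "p < 2" and y: "\<And>i. i \<in> I \<Longrightarrow> y i \<ge> 0"
  shows "(\<Sum>i\<in>I. y i powr p) powr (1/p) \<le> real (card I) powr (1/p - 1/2) * L2_set y I"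
proof -
  define m where "m = real (card I)"
  define U where "U = (\<Sum>i\<in>I. y i powr p)"
  define S where "S = (\<Sum>i\<in>I. (y i)\<^sup>2)"
  have m: "m > 0"
    unfolding m_def using I by (simp add: card_gt_0_iff)
  have U: "U \<ge> 0" and S: "S \<ge> 0"
    unfolding U_def S_def by (auto intro: sum_nonneg)
  \<comment> \<open>Jensen's inequality for the convex function x powr (2/p) and the uniform weights 1/m.\<close>
  have "(\<Sum>i\<in>I. (1/m) *\<^sub>R y i powr p) powr (2/p) \<le> (\<Sum>i\<in>I. (1/m) * (y i powr p) powr (2/p))"
    using I m p by (intro convex_on_sum[OF _ _ convex_on_powr_nonneg]) (auto simp: m_def)
  also have "\<dots> = S / m"
    using y p unfolding S_def by (simp add: powr_powr sum_divide_distrib)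
  finally have "(U / m) powr (2/p) \<le> S / m"
    unfolding U_def by (simp add: sum_divide_distrib)
  then have "((U / m) powr (2/p)) powr (p/2) \<le> (S / m) powr (p/2)"
    using p by (intro powr_mono2) auto
  then have "U \<le> m * (S / m) powr (p/2)"
    using m U p by (simp add: powr_powr field_simps)
  then have "U powr (1/p) \<le> (m * (S / m) powr (p/2)) powr (1/p)"
    using U p by (intro powr_mono2) auto
  also have "\<dots> = m powr (1/p - 1/2) * sqrt S"
    using m S p by (simp add: powr_mult powr_powr powr_divide powr_diff powr_half_sqrt real_sqrt_divide)
  finally show ?thesis
    unfolding U_def m_def S_def L2_set_def .
qed

lemma sq_diff_le_weighted:
  fixes a b u v :: real
  assumes "u > 0" "v > 0"
  shows "(b - a)\<^sup>2 \<le> (1 + v / u) * a\<^sup>2 + (1 + u / v) * b\<^sup>2"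
proof -
  have "(1 + v / u) * a\<^sup>2 + (1 + u / v) * b\<^sup>2 - (b - a)\<^sup>2 = (v * a + u * b)\<^sup>2 / (u * v)"
    using assms by (simp add: field_simps power2_eq_square)
  also have "\<dots> \<ge> 0"
    using assms by simp
  finally show ?thesis
    by simp
qed

text \<open>Each square (x i - x (i - 1))^2 is split by sq_diff_le_weighted with the weights w (i - 1)
  and w i; the recurrence for w makes the resulting coefficient of every (x i)^2 equal to 2 + c.\<close>
lemma sum_sq_diff_le_weighted:
  fixes x :: "nat \<Rightarrow> real" and w :: "int \<Rightarrow> real"
  assumes pos: "\<And>k. 0 \<le> k \<Longrightarrow> k \<le> int m \<Longrightarrow> w k > 0"
    and rec: "\<And>k. 0 \<le> k \<Longrightarrow> k < int m \<Longrightarrow> w (k - 1) + w (k + 1) = c * w k"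
    and start: "w (-1) = - w 0"
  shows "(\<Sum>i\<in>{1..m}. (x i - x (i - 1))\<^sup>2)
    \<le> (2 + c) * (\<Sum>i<m. (x i)\<^sup>2) + (1 + w (int m - 1) / w (int m)) * (x m)\<^sup>2"
  using pos rec
proof (induction m)
  case 0
  then show ?case
    using start by simp
next
  case (Suc m)
  have w_pos: "w (int m) > 0" "w (int m + 1) > 0"
    using Suc.prems(1)[of "int m"] Suc.prems(1)[of "int m + 1"] by auto
  have coeff: "(1 + w (int m - 1) / w (int m)) + (1 + w (int m + 1) / w (int m)) = 2 + c"
  proof -
    have "(1 + w (int m - 1) / w (int m)) + (1 + w (int m + 1) / w (int m))
        = 2 + (w (int m - 1) + w (int m + 1)) / w (int m)"
      by (simp add: add_divide_distrib)
    then show ?thesis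
      using Suc.prems(2)[of "int m"] w_pos by simp
  qed
  have "(\<Sum>i\<in>{1..Suc m}. (x i - x (i - 1))\<^sup>2)
      = (\<Sum>i\<in>{1..m}. (x i - x (i - 1))\<^sup>2) + (x (Suc m) - x m)\<^sup>2"
    by simp
  also have "\<dots> \<le> (2 + c) * (\<Sum>i<m. (x i)\<^sup>2) + (1 + w (int m - 1) / w (int m)) * (x m)\<^sup>2
      + ((1 + w (int m + 1) / w (int m)) * (x m)\<^sup>2 + (1 + w (int m) / w (int m + 1)) * (x (Suc m))\<^sup>2)"
    using Suc.IH Suc.prems sq_diff_le_weighted[OF w_pos, where a = "x m" and b = "x (Suc m)"]
    by (intro add_mono) (simp_all add: power2_commute)
  also have "\<dots> = (2 + c) * (\<Sum>i<m. (x i)\<^sup>2)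
      + ((1 + w (int m - 1) / w (int m)) + (1 + w (int m + 1) / w (int m))) * (x m)\<^sup>2
      + (1 + w (int m) / w (int m + 1)) * (x (Suc m))\<^sup>2"
    by (simp only: distrib_right add.assoc)
  also have "\<dots> = (2 + c) * (\<Sum>i<Suc m. (x i)\<^sup>2) + (1 + w (int (Suc m) - 1) / w (int (Suc m))) * (x (Suc m))\<^sup>2"
    unfolding coeff by (simp add: distrib_left add.commute)
  finally show ?case .
qed

lemma sum_sq_diff_le:
  fixes x :: "nat \<Rightarrow> real"
  assumes n: "n \<ge> 2"
  shows "(\<Sum>i\<in>{1..<n}. (x i - x (i - 1))\<^sup>2) \<le> (2 * cos (pi / (2 * n)))\<^sup>2 * (\<Sum>i<n. (x i)\<^sup>2)"
proof -
  define \<theta> where "\<theta> = pi / (2 * n)"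
  define w where "w k = sin ((2 * k + 1) * \<theta>)" for k :: int
  define c where "c = 2 * cos (2 * \<theta>)"
  have \<theta>: "\<theta> > 0" "2 * n * \<theta> = pi"
    unfolding \<theta>_def using n by auto
  have pos: "w k > 0" if "0 \<le> k" "k \<le> int (n - 1)" for k
  proof -
    have "(2 * k + 1) * \<theta> < 2 * n * \<theta>"
      using that n \<theta> by (intro mult_strict_right_mono) auto
    moreover have "0 < (2 * k + 1) * \<theta>"
      using that \<theta> by simp
    ultimately show ?thesis
      unfolding w_def \<theta>(2) by (simp add: sin_gt_zero)
  qed
  have rec: "w (k - 1) + w (k + 1) = c * w k" for k
  proof -
    have "w (k - 1) = sin ((2 * k + 1) * \<theta> - 2 * \<theta>)" "w (k + 1) = sin ((2 * k + 1) * \<theta> + 2 * \<theta>)"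
      unfolding w_def by (simp_all add: algebra_simps)
    then show ?thesis
      unfolding c_def w_def by (simp add: sin_add sin_diff)
  qed
  have start: "w (-1) = - w 0"
    unfolding w_def by simp
  \<comment> \<open>The weights are symmetric about the middle of the path: w (n - 1 - k) = w k.\<close>
  have "w (int (n - 1)) = w 0" "w (int (n - 1) - 1) = w 1"
    unfolding w_def using n \<theta>(2) by (simp_all add: of_nat_diff algebra_simps sin_diff)
  then have last_coeff: "1 + w (int (n - 1) - 1) / w (int (n - 1)) = 2 + c"
    using rec[of 0] start pos[of 0] by (simp add: field_simps)
  have "(\<Sum>i\<in>{1..<n}. (x i - x (i - 1))\<^sup>2) = (\<Sum>i\<in>{1..n - 1}. (x i - x (i - 1))\<^sup>2)"
    using n by (intro sum.cong) auto
  also have "\<dots> \<le> (2 + c) * (\<Sum>i<n - 1. (x i)\<^sup>2) + (2 + c) * (x (n - 1))\<^sup>2"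
    using sum_sq_diff_le_weighted[of "n - 1" w c x, OF pos rec start]
    unfolding last_coeff .
  also have "\<dots> = (2 + c) * (\<Sum>i<n. (x i)\<^sup>2)"
  proof -
    have "n = Suc (n - 1)"
      using n by simp
    then have "(\<Sum>i<n. (x i)\<^sup>2) = (\<Sum>i<n - 1. (x i)\<^sup>2) + (x (n - 1))\<^sup>2"
      by (metis sum.lessThan_Suc)
    then show ?thesis
      by (simp add: distrib_left)
  qed
  also have "2 + c = (2 * cos \<theta>)\<^sup>2"
    unfolding c_def cos_double_cos by (simp add: power_mult_distrib algebra_simps)
  finally show ?thesis
    unfolding \<theta>_def .
qed

lemma enorm_eq_L2_set: "enorm n x = L2_set x {..<n}"
  by (simp add: enorm_def L2_set_def)

lemma enorm_nonneg: "enorm n x \<ge> 0"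
  by (simp add: enorm_eq_L2_set)

lemma enorm_power2: "(enorm n x)\<^sup>2 = (\<Sum>i<n. (x i)\<^sup>2)"
  by (simp add: enorm_def sum_nonneg)

lemma enorm_scale: "enorm n (\<lambda>i. c * x i) = \<bar>c\<bar> * enorm n x"
proof -
  have "enorm n (\<lambda>i. c * x i) = L2_set (\<lambda>i. \<bar>c\<bar> * x i) {..<n}"
    by (simp add: enorm_def L2_set_def power_mult_distrib)
  then show ?thesis
    by (simp add: enorm_eq_L2_set L2_set_right_distrib)
qed

lemma abs_le_enorm:
  assumes "i < n"
  shows "\<bar>x i\<bar> \<le> enorm n x"
proof -
  have "\<bar>x i\<bar> \<le> L2_set (\<lambda>i. \<bar>x i\<bar>) {..<n}"
    using assms by (intro member_le_L2_set) auto
  also have "L2_set (\<lambda>i. \<bar>x i\<bar>) {..<n} = enorm n x"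
    by (simp add: enorm_def L2_set_def)
  finally show ?thesis .
qed

lemma dotp_scale: "dotp n g (\<lambda>i. c * s i) = c * dotp n g s"
  by (simp add: dotp_def sum_distrib_left algebra_simps)

lemma dotp_ge_neg_enorm_mult: "dotp n g s \<ge> - (enorm n g * enorm n s)"
proof -
  have "\<bar>dotp n g s\<bar> \<le> (\<Sum>i<n. \<bar>g i * s i\<bar>)"
    unfolding dotp_def by (rule sum_abs)
  also have "\<dots> = (\<Sum>i<n. \<bar>g i\<bar> * \<bar>s i\<bar>)"
    by (simp add: abs_mult)
  also have "\<dots> \<le> enorm n g * enorm n s"
    unfolding enorm_eq_L2_set by (rule L2_set_mult_ineq)
  finally show ?thesis
    by linarith
qed

lemma L2_set_diff_le_enorm:
  fixes x :: "nat \<Rightarrow> real"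
  assumes n: "n \<ge> 2"
  shows "L2_set (\<lambda>i. x i - x (i - 1)) {1..<n} \<le> 2 * sin (pi * (real n - 1) / (2 * real n)) * enorm n x"
proof -
  define \<theta> where "\<theta> = pi / (2 * n)"
  have sin_eq: "sin (pi * (real n - 1) / (2 * real n)) = cos \<theta>"
    unfolding \<theta>_def using n by (simp add: sin_cos_eq field_simps)
  have "sin (pi * (real n - 1) / (2 * real n)) \<ge> 0"
    using n by (intro sin_ge_zero) (auto simp: field_simps)
  then have cos_nonneg: "cos \<theta> \<ge> 0"
    unfolding sin_eq .
  have "L2_set (\<lambda>i. x i - x (i - 1)) {1..<n} \<le> sqrt ((2 * cos \<theta>)\<^sup>2 * (\<Sum>i<n. (x i)\<^sup>2))"
    unfolding L2_set_def \<theta>_def by (rule real_sqrt_le_mono[OF sum_sq_diff_le[OF n]])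
  also have "\<dots> = sqrt ((2 * cos \<theta>)\<^sup>2) * enorm n x"
    unfolding enorm_def by (rule real_sqrt_mult)
  also have "sqrt ((2 * cos \<theta>)\<^sup>2) = 2 * cos \<theta>"
    using cos_nonneg by (intro real_sqrt_unique) auto
  finally show ?thesis
    unfolding sin_eq .
qed

lemma TVp_nonneg: "TVp n p x \<ge> 0"
  by (simp add: TVp_def)

lemma TVp_triangle:
  assumes p: "p \<ge> 1"
  shows "TVp n p (\<lambda>i. x i + y i) \<le> TVp n p x + TVp n p y"
proof -
  have "TVp n p (\<lambda>i. x i + y i)
      \<le> (\<Sum>i\<in>{1..<n}. (\<bar>x i - x (i - 1)\<bar> + \<bar>y i - y (i - 1)\<bar>) powr p) powr (1/p)"
    unfolding TVp_def using p by (intro powr_mono2 sum_mono) (auto intro: sum_nonneg)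
  also have "\<dots> \<le> TVp n p x + TVp n p y"
    unfolding TVp_def using p by (intro powr_sum_triangle_ineq) auto
  finally show ?thesis .
qed

lemma TVp_scale:
  assumes p: "p > 0"
  shows "TVp n p (\<lambda>i. c * x i) = \<bar>c\<bar> * TVp n p x"
proof -
  have "(\<Sum>i\<in>{1..<n}. \<bar>c * x i - c * x (i - 1)\<bar> powr p)
      = \<bar>c\<bar> powr p * (\<Sum>i\<in>{1..<n}. \<bar>x i - x (i - 1)\<bar> powr p)"
    by (simp add: sum_distrib_left powr_mult abs_mult flip: right_diff_distrib)
  then show ?thesis
    unfolding TVp_def using p by (simp add: powr_mult powr_powr)
qed

lemma continuous_on_TVp_shift:
  assumes p: "p > 0"
  shows "continuous_on UNIV (\<lambda>s. TVp n p (\<lambda>i. xk i + s i))"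
  unfolding TVp_def using p
  by (intro continuous_on_powr' continuous_intros continuous_on_product_coordinates)
    (auto intro: sum_nonneg)

text \<open>The first factor equals 2 cos (pi / (2 n)), the norm of the difference operator; the second
  compares the p-norm with the 2-norm on R^(n-1).\<close>
definition TVp_lipschitz_const :: "nat \<Rightarrow> real \<Rightarrow> real" where
  "TVp_lipschitz_const n p =
    2 * sin (pi * (real n - 1) / (2 * real n)) * (if p < 2 then real n powr (1/p - 1/2) else 1)"

lemma TVp_lipschitz_const_nonneg: "n \<ge> 2 \<Longrightarrow> TVp_lipschitz_const n p \<ge> 0"
  unfolding TVp_lipschitz_const_def by (intro mult_nonneg_nonneg sin_ge_zero) (auto simp: field_simps)

lemma TVp_le_lipschitz_const_enorm:
  assumes n: "n \<ge> 2" and p: "p \<ge> 1"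
  shows "TVp n p x \<le> TVp_lipschitz_const n p * enorm n x"
proof -
  define d where "d i = \<bar>x i - x (i - 1)\<bar>" for i
  define C where "C = (if p < 2 then real n powr (1/p - 1/2) else 1)"
  have TVp_d: "TVp n p x = (\<Sum>i\<in>{1..<n}. d i powr p) powr (1/p)"
    by (simp add: TVp_def d_def)
  have "TVp n p x \<le> C * L2_set d {1..<n}"
  proof (cases "p < 2")
    case True
    have "TVp n p x \<le> real (card {1..<n}) powr (1/p - 1/2) * L2_set d {1..<n}"
      unfolding TVp_d using n p True by (intro powr_sum_root_le_card_powr_L2_set) (auto simp: d_def)
    also have "\<dots> \<le> real n powr (1/p - 1/2) * L2_set d {1..<n}"
      using True p n by (intro mult_right_mono powr_mono2) (auto simp: divide_simps)
    finally show ?thesis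
      using True by (simp add: C_def)
  next
    case False
    then have "(\<Sum>i\<in>{1..<n}. d i powr p) powr (1/p) \<le> L2_set d {1..<n}"
      by (intro powr_sum_root_le_L2_set) (auto simp: d_def)
    then show ?thesis
      using False by (simp add: TVp_d C_def)
  qed
  also have "L2_set d {1..<n} = L2_set (\<lambda>i. x i - x (i - 1)) {1..<n}"
    by (simp add: d_def L2_set_def)
  also have "C * \<dots> \<le> C * (2 * sin (pi * (real n - 1) / (2 * real n)) * enorm n x)"
    unfolding C_def by (intro mult_left_mono L2_set_diff_le_enorm n) simp
  also have "\<dots> = TVp_lipschitz_const n p * enorm n x"
    by (simp add: TVp_lipschitz_const_def C_def)
  finally show ?thesis .
qed

lemma TVp_shift_midpoint_convex:
  assumes p: "p \<ge> 1"
  shows "TVp n p (\<lambda>i. xk i + (u i + v i) / 2)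
    \<le> (TVp n p (\<lambda>i. xk i + u i) + TVp n p (\<lambda>i. xk i + v i)) / 2"
proof -
  have p_pos: "p > 0"
    using p by simp
  have "TVp n p (\<lambda>i. xk i + (u i + v i) / 2)
      = TVp n p (\<lambda>i. 1/2 * (xk i + u i) + 1/2 * (xk i + v i))"
    by (simp add: algebra_simps add_divide_distrib)
  also have "\<dots> \<le> TVp n p (\<lambda>i. 1/2 * (xk i + u i)) + TVp n p (\<lambda>i. 1/2 * (xk i + v i))"
    using p by (rule TVp_triangle)
  also have "\<dots> = (TVp n p (\<lambda>i. xk i + u i) + TVp n p (\<lambda>i. xk i + v i)) / 2"
    using p unfolding TVp_scale[OF p_pos] by simp
  finally show ?thesis .
qed

lemma TVp_shift_add_le:
  assumes n: "n \<ge> 2" and p: "p \<ge> 1"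
  shows "TVp n p (\<lambda>i. xk i + (u i + v i))
    \<le> TVp n p (\<lambda>i. xk i + u i) + TVp_lipschitz_const n p * enorm n v"
proof -
  have "TVp n p (\<lambda>i. xk i + (u i + v i)) \<le> TVp n p (\<lambda>i. xk i + u i) + TVp n p v"
    using TVp_triangle[OF p, where x = "\<lambda>i. xk i + u i" and y = v] by (simp add: add.assoc)
  with TVp_le_lipschitz_const_enorm[OF n p, where x = v] show ?thesis
    by linarith
qed

definition prox_obj :: "nat \<Rightarrow> (nat \<Rightarrow> real) \<Rightarrow> real \<Rightarrow> ((nat \<Rightarrow> real) \<Rightarrow> real)
    \<Rightarrow> (nat \<Rightarrow> real) \<Rightarrow> real" where
  "prox_obj n g \<nu> \<phi> s = dotp n g s + 1/2 * inverse \<nu> * (enorm n s)\<^sup>2 + \<phi> s"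

lemma cp_obj_eq_prox_obj: "cp_obj n p xk g \<nu> = prox_obj n g \<nu> (\<lambda>s. TVp n p (\<lambda>i. xk i + s i))"
  by (simp add: fun_eq_iff cp_obj_def prox_obj_def)

lemma continuous_on_prox_obj:
  assumes "continuous_on UNIV \<phi>"
  shows "continuous_on UNIV (prox_obj n g \<nu> \<phi>)"
proof -
  show ?thesis
    unfolding prox_obj_def[abs_def] dotp_def enorm_def
    by (intro continuous_intros continuous_on_product_coordinates assms)
qed

lemma prox_obj_gt_at_zero:
  assumes \<nu>: "\<nu> > 0" and nonneg: "\<And>s. \<phi> s \<ge> 0"
    and large: "enorm n s > 2 * \<nu> * (enorm n g + \<phi> (\<lambda>_. 0)) + 1"
  shows "prox_obj n g \<nu> \<phi> s > prox_obj n g \<nu> \<phi> (\<lambda>_. 0)"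
proof -
  define E where "E = enorm n s"
  define a where "a = E / (2 * \<nu>) - enorm n g"
  have a: "a > \<phi> (\<lambda>_. 0)"
    using large \<nu> unfolding a_def E_def by (simp add: field_simps)
  have "E \<ge> 1"
    using large \<nu> nonneg[of "\<lambda>_. 0"] enorm_nonneg[of n g] unfolding E_def
    by (smt (verit) mult_nonneg_nonneg)
  then have "a \<le> E * a"
    using a nonneg[of "\<lambda>_. 0"] mult_right_mono[of 1 E a] by simp
  with a have "E * a > \<phi> (\<lambda>_. 0)"
    by linarith
  moreover have "E * a = 1/2 * inverse \<nu> * E\<^sup>2 - enorm n g * E"
    unfolding a_def by (simp add: power2_eq_square field_simps)
  moreover have "prox_obj n g \<nu> \<phi> (\<lambda>_. 0) = \<phi> (\<lambda>_. 0)"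
    by (simp add: prox_obj_def dotp_def enorm_def)
  ultimately show ?thesis
    using dotp_ge_neg_enorm_mult[of n g s] nonneg[of s] unfolding prox_obj_def E_def by linarith
qed

lemma prox_obj_has_arg_min:
  assumes \<nu>: "\<nu> > 0" and cont: "continuous_on UNIV \<phi>" and nonneg: "\<And>s. \<phi> s \<ge> 0"
  shows "\<exists>s. is_arg_min (prox_obj n g \<nu> \<phi>) (\<lambda>s. s \<in> vecs n) s"
proof -
  define f where "f = prox_obj n g \<nu> \<phi>"
  define R where "R = 2 * \<nu> * (enorm n g + \<phi> (\<lambda>_. 0)) + 1"
  define box where "box = Pi\<^sub>E UNIV (\<lambda>i. if i < n then {-R..R} else {0::real})"
  have R: "R \<ge> 1"
    unfolding R_def using \<nu> nonneg enorm_nonneg[of n g] by simp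
  have "compactin (product_topology (\<lambda>_. euclidean) UNIV) box"
    unfolding box_def by (subst compactin_PiE) auto
  then have "compact box"
    by (simp add: euclidean_product_topology)
  moreover have zero_in_box: "(\<lambda>_. 0) \<in> box"
    unfolding box_def using R by (simp add: PiE_iff)
  moreover have "continuous_on box f"
    using continuous_on_prox_obj[OF cont] unfolding f_def by (rule continuous_on_subset) simp
  ultimately obtain s where s: "s \<in> box" and s_min: "\<And>t. t \<in> box \<Longrightarrow> f s \<le> f t"
    using continuous_attains_inf[of box f] by blast
  have box_coord: "t \<in> box \<longleftrightarrow> (\<forall>i. t i \<in> (if i < n then {-R..R} else {0}))" for t
    unfolding box_def by (simp add: PiE_iff)
  have "f s \<le> f t" if t: "t \<in> vecs n" for t
  proof (cases "t \<in> box")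
    case False
    then obtain i where i: "t i \<notin> (if i < n then {-R..R} else {0})"
      unfolding box_coord by blast
    have "i < n"
    proof (rule ccontr)
      assume "\<not> i < n"
      with t i show False
        unfolding vecs_def by simp
    qed
    with i R have "R < \<bar>t i\<bar>"
      by (auto simp: abs_if not_le)
    also have "\<bar>t i\<bar> \<le> enorm n t"
      using \<open>i < n\<close> by (rule abs_le_enorm)
    finally have "f t > f (\<lambda>_. 0)"
      unfolding f_def R_def by (intro prox_obj_gt_at_zero \<nu> nonneg)
    then show ?thesis
      using s_min[OF zero_in_box] by simp
  qed (rule s_min)
  moreover have "s \<in> vecs n"
    unfolding vecs_def
  proof (intro CollectI allI impI)
    fix i
    assume "n \<le> i"
    with s show "s i = 0"
      unfolding box_coord by (metis insert_iff empty_iff not_le)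
  qed
  ultimately show ?thesis
    unfolding f_def by (auto simp: is_arg_min_linorder)
qed

lemma prox_obj_arg_min_unique:
  assumes \<nu>: "\<nu> > 0"
    and midpoint_convex: "\<And>u v. \<phi> (\<lambda>i. (u i + v i) / 2) \<le> (\<phi> u + \<phi> v) / 2"
    and s1: "is_arg_min (prox_obj n g \<nu> \<phi>) (\<lambda>s. s \<in> vecs n) s1"
    and s2: "is_arg_min (prox_obj n g \<nu> \<phi>) (\<lambda>s. s \<in> vecs n) s2"
  shows "s1 = s2"
proof -
  define f where "f = prox_obj n g \<nu> \<phi>"
  define m where "m i = (s1 i + s2 i) / 2" for i
  define Q where "Q = (\<Sum>i<n. (s1 i - s2 i)\<^sup>2)"
  have mem: "s1 \<in> vecs n" "s2 \<in> vecs n" "m \<in> vecs n"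
    using s1 s2 unfolding m_def vecs_def by (auto simp: is_arg_min_linorder)
  have dotp_m: "dotp n g m = (dotp n g s1 + dotp n g s2) / 2"
    unfolding m_def dotp_def by (simp add: sum.distrib algebra_simps flip: sum_divide_distrib)
  have enorm_m: "(enorm n m)\<^sup>2 = ((enorm n s1)\<^sup>2 + (enorm n s2)\<^sup>2) / 2 - Q / 4"
  proof -
    have "(\<Sum>i<n. (m i)\<^sup>2) = (\<Sum>i<n. ((s1 i)\<^sup>2 + (s2 i)\<^sup>2) / 2 - (s1 i - s2 i)\<^sup>2 / 4)"
      unfolding m_def by (intro sum.cong) (simp_all add: power2_eq_square field_simps)
    then show ?thesis
      unfolding enorm_power2 Q_def by (simp add: sum_subtractf sum.distrib flip: sum_divide_distrib)
  qed
  have "f m = (dotp n g s1 + dotp n g s2) / 2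
      + (1/2 * inverse \<nu> * (enorm n s1)\<^sup>2 + 1/2 * inverse \<nu> * (enorm n s2)\<^sup>2) / 2
      - inverse \<nu> * Q / 8 + \<phi> m"
    unfolding f_def prox_obj_def dotp_m enorm_m by (simp add: algebra_simps)
  then have "f m \<le> (f s1 + f s2) / 2 - inverse \<nu> * Q / 8"
    using midpoint_convex[of s1 s2] unfolding f_def prox_obj_def m_def by argo
  moreover have "f s1 \<le> f m" "f s1 = f s2"
    using s1 s2 mem unfolding f_def by (auto simp: is_arg_min_linorder intro: antisym)
  ultimately have "inverse \<nu> * Q \<le> 0"
    by argo
  then have "Q = 0"
    using \<nu> by (simp add: Q_def mult_le_0_iff sum_nonneg order_antisym)
  then have below_n: "s1 i = s2 i" if "i < n" for i
    using that unfolding Q_def by (simp add: sum_nonneg_eq_0_iff)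
  show ?thesis
  proof
    fix i
    show "s1 i = s2 i"
      using below_n[of i] mem(1,2) unfolding vecs_def by (cases "i < n") simp_all
  qed
qed

lemma prox_obj_arg_min_enorm_le:
  assumes \<nu>: "\<nu> > 0" and L: "L \<ge> 0"
    and lipschitz: "\<And>u v. \<phi> (\<lambda>i. u i + v i) \<le> \<phi> u + L * enorm n v"
    and s: "is_arg_min (prox_obj n g \<nu> \<phi>) (\<lambda>s. s \<in> vecs n) s"
  shows "enorm n s \<le> \<nu> * (enorm n g + L)"
proof -
  define E where "E = enorm n s"
  define D where "D = dotp n g s"
  \<comment> \<open>Compare s with its rescaling (1 - \<tau>) s, \<tau> = 2 (1 - z), and let z tend to 1.\<close>
  have "z * (E\<^sup>2 / \<nu>) \<le> (enorm n g + L) * E" if z: "0 < z" "z < 1" for z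
  proof -
    define \<tau> where "\<tau> = 2 * (1 - z)"
    have \<tau>: "\<tau> > 0"
      unfolding \<tau>_def using z by simp
    have "(\<lambda>i. (1 - \<tau>) * s i) = (\<lambda>i. s i + (- \<tau>) * s i)"
      by (simp add: fun_eq_iff algebra_simps)
    then have "\<phi> (\<lambda>i. (1 - \<tau>) * s i) \<le> \<phi> s + L * enorm n (\<lambda>i. (- \<tau>) * s i)"
      by (simp only: lipschitz)
    also have "enorm n (\<lambda>i. (- \<tau>) * s i) = \<tau> * E"
      unfolding enorm_scale E_def using \<tau> by simp
    finally have \<phi>_scaled: "\<phi> (\<lambda>i. (1 - \<tau>) * s i) \<le> \<phi> s + L * (\<tau> * E)" .
    have "(\<lambda>i. (1 - \<tau>) * s i) \<in> vecs n"
      using s by (auto simp: is_arg_min_linorder vecs_def)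
    then have "prox_obj n g \<nu> \<phi> s \<le> prox_obj n g \<nu> \<phi> (\<lambda>i. (1 - \<tau>) * s i)"
      using s by (simp add: is_arg_min_linorder)
    also have "\<dots> = (1 - \<tau>) * D + 1/2 * inverse \<nu> * ((1 - \<tau>)\<^sup>2 * E\<^sup>2) + \<phi> (\<lambda>i. (1 - \<tau>) * s i)"
      by (simp add: prox_obj_def dotp_scale enorm_scale power_mult_distrib D_def E_def)
    also have "1/2 * inverse \<nu> * ((1 - \<tau>)\<^sup>2 * E\<^sup>2) = 1/2 * inverse \<nu> * E\<^sup>2 - \<tau> * (z * (E\<^sup>2 / \<nu>))"
      using \<nu> unfolding \<tau>_def by (simp add: power2_eq_square field_simps)
    finally have "\<tau> * (D + z * (E\<^sup>2 / \<nu>)) \<le> \<tau> * (L * E)"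
      using \<phi>_scaled unfolding prox_obj_def D_def[symmetric] E_def[symmetric]
      by (simp add: algebra_simps)
    then have "D + z * (E\<^sup>2 / \<nu>) \<le> L * E"
      using \<tau> by simp
    then show ?thesis
      using dotp_ge_neg_enorm_mult[of n g s] unfolding D_def E_def by (simp add: algebra_simps)
  qed
  then have "E\<^sup>2 / \<nu> \<le> (enorm n g + L) * E"
    by (rule field_le_mult_one_interval)
  then have "E * E \<le> E * (\<nu> * (enorm n g + L))"
    using \<nu> by (simp add: power2_eq_square field_simps)
  moreover have "E \<ge> 0" "\<nu> * (enorm n g + L) \<ge> 0"
    unfolding E_def using \<nu> L by (simp_all add: enorm_nonneg)
  ultimately show ?thesis
    unfolding E_def[symmetric] by (cases "E = 0") (simp_all add: mult_le_cancel_left_pos)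
qed

theorem corollary4p3:
  fixes n :: nat and p \<nu> :: real and xk g :: "nat \<Rightarrow> real"
  assumes "n \<ge> 2" and "1 \<le> p"
    and "xk \<in> vecs n" and "g \<in> vecs n" and "\<nu> > 0"
  shows "(\<exists>!s. s \<in> vecs n \<and> (\<forall>t\<in>vecs n. cp_obj n p xk g \<nu> s \<le> cp_obj n p xk g \<nu> t))
    \<and> (\<forall>s. s \<in> vecs n \<and> (\<forall>t\<in>vecs n. cp_obj n p xk g \<nu> s \<le> cp_obj n p xk g \<nu> t) \<longrightarrow>
      enorm n s \<le>
        (if p < 2
         then \<nu> * (enorm n g + 2 * sin (pi * (real n - 1) / (2 * real n)) * real n powr (1/p - 1/2))
         else \<nu> * (enorm n g + 2 * sin (pi * (real n - 1) / (2 * real n)))))"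
proof -
  let ?\<psi> = "\<lambda>s. TVp n p (\<lambda>i. xk i + s i)"
  let ?is_min = "is_arg_min (prox_obj n g \<nu> ?\<psi>) (\<lambda>s. s \<in> vecs n)"
  have minimizer_iff: "(s \<in> vecs n \<and> (\<forall>t\<in>vecs n. cp_obj n p xk g \<nu> s \<le> cp_obj n p xk g \<nu> t))
      \<longleftrightarrow> ?is_min s" for s
    by (auto simp: cp_obj_eq_prox_obj is_arg_min_linorder)
  have "\<exists>s. ?is_min s"
    using assms by (intro prox_obj_has_arg_min continuous_on_TVp_shift TVp_nonneg) auto
  moreover have "s1 = s2" if "?is_min s1" "?is_min s2" for s1 s2
    using prox_obj_arg_min_unique[OF \<open>\<nu> > 0\<close> _ that] TVp_shift_midpoint_convex assms(2) by blast
  moreover have "enorm n s \<le> \<nu> * (enorm n g + TVp_lipschitz_const n p)" if "?is_min s" for s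
    using prox_obj_arg_min_enorm_le[OF \<open>\<nu> > 0\<close> TVp_lipschitz_const_nonneg[OF assms(1)] _ that]
      TVp_shift_add_le[OF assms(1,2)] by blast
  ultimately show ?thesis
    unfolding minimizer_iff by (auto simp: TVp_lipschitz_const_def)
qed

end
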